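(* Let $(X,d,A)$ be a metric pair with $A$ not isolated and let $p\in[1,\infty]$. Then $(D(X,A),W_p)$ and $(\overline{D}_p(X,A),W_p)$ are not hemicompact.
   Context: A metric on $X$ is a map $d:X\times X\to[0,\infty]$ with $d(x,x)=0$, symmetry and the triangle inequality (infinite distances allowed, $d(x,y)=0$ need not imply $x=y$); a metric pair $(X,d,A)$ is such a space with a closed subset $A$. Write $d(x,A)=\inf_{a\in A}d(x,a)$, $A^\delta=\{x:d(x,A)<\delta\}$ for $\delta\in(0,\infty]$; $A$ is isolated if $A^\delta=A$ for some $\delta>0$. $\overline{D}(X,A)$ is the set of countable formal sums $\hat\alpha=\sum_{i\in I}x_i$ of points of $X\setminus A$ (repetitions allowed); $D(X,A)$ the finite ones; $0$ the empty sum. A matching of $\hat\alpha=\sum_{i\in I}x_i$, $\hat\beta=\sum_{j\in J}y_j$ is a formal sum $\sum_{k\in K}(x_k,y_{\varphi(k)})+\sum_{i\in I\setminus K}(x_i,z_i)+\sum_{j\in J\setminus\varphi(K)}(w_j,y_j)$ with $K\subset I$, $\varphi$ injective, $z_i,w_j\in A$; its $p$-cost is the $\ell^p$ norm (sup norm if $p=\infty$) of the distances of paired points; $W_p$ is the infimum of $p$-costs. $u_\delta(\alpha)$, $\ell_\delta(\alpha)$ are the restrictions of $\hat\alpha$ to $X\setminus A^\delta$ and to $A^\delta\setminus A$. For $p<\infty$, $\overline{D}_p(X,A)=\{\alpha: |u_\infty(\alpha)|<\infty,\ W_p(\ell_\infty(\alpha),0)<\infty\}$; $\overline{D}_\infty(X,A)=\{\alpha:|u_\delta(\alpha)|<\infty\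 \forall\delta>0\}$. A topological space is hemicompact if it has a sequence of compact subsets $K_1,K_2,\dots$ such that every compact subset of the space is contained in some $K_n$. *)

theory Defs
  imports "HOL-Analysis.Analysis"
begin

definition ext_metric :: "('a \<Rightarrow> 'a \<Rightarrow> ennreal) \<Rightarrow> bool" where
  "ext_metric d \<longleftrightarrow> (\<forall>x. d x x = 0) \<and> (\<forall>x y. d x y = d y x)
     \<and> (\<forall>x y z. d x z \<le> d x y + d y z)"

definition dist_topology :: "'b set \<Rightarrow> ('b \<Rightarrow> 'b \<Rightarrow> ennreal) \<Rightarrow> 'b topology" where
  "dist_topology S \<rho> = topology (\<lambda>U. U \<subseteq> S \<and> (\<forall>x\<in>U. \<exists>e>0. {y\<in>S. \<rho> x y < e} \<subseteq> U))"

definition setdist :: "('a \<Rightarrow> 'a \<Rightarrow> ennreal) \<Rightarrow> 'a \<Rightarrow> 'a set \<Rightarrow> ennreal" where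
  "setdist d x A = (INF a\<in>A. d x a)"

definition thick :: "('a \<Rightarrow> 'a \<Rightarrow> ennreal) \<Rightarrow> 'a set \<Rightarrow> ennreal \<Rightarrow> 'a set" where
  "thick d A \<delta> = {x. setdist d x A < \<delta>}"

definition isolated_set :: "('a \<Rightarrow> 'a \<Rightarrow> ennreal) \<Rightarrow> 'a set \<Rightarrow> bool" where
  "isolated_set d A \<longleftrightarrow> (\<exists>\<delta>>0. thick d A \<delta> = A)"

definition metric_pair :: "('a \<Rightarrow> 'a \<Rightarrow> ennreal) \<Rightarrow> 'a set \<Rightarrow> bool" where
  "metric_pair d A \<longleftrightarrow> ext_metric d \<and> closedin (dist_topology UNIV d) A"

definition hemicompact :: "'b topology \<Rightarrow> bool" where
  "hemicompact T \<longleftrightarrow> (\<exists>K :: nat \<Rightarrow> 'b set. (\<forall>n. compactin T (K n))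
      \<and> (\<forall>C. compactin T C \<longrightarrow> (\<exists>n. C \<subseteq> K n)))"

definition usum :: "('b \<Rightarrow> 'c::{complete_lattice, comm_monoid_add}) \<Rightarrow> 'b set \<Rightarrow> 'c" where
  "usum f S = (SUP F\<in>{F. finite F \<and> F \<subseteq> S}. sum f F)"

text \<open>A countable formal sum of points (repetitions allowed) is represented by its
  multiplicity function, with values in {0,1,2,...,\<infinity>} and countable support.\<close>
type_synonym 'a fsum = "'a \<Rightarrow> enat"

definition supp :: "'a fsum \<Rightarrow> 'a set" where
  "supp \<alpha> = {x. \<alpha> x \<noteq> 0}"

definition Dbar :: "'a set \<Rightarrow> 'a fsum set" where
  "Dbar A = {\<alpha>. countable (supp \<alpha>) \<and> supp \<alpha> \<subseteq> - A}"

definition Dfin :: "'a set \<Rightarrow> 'a fsum set" where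
  "Dfin A = {\<alpha>\<in>Dbar A. finite (supp \<alpha>) \<and> (\<forall>x. \<alpha> x \<noteq> \<infinity>)}"

definition zero_diag :: "'a fsum" where
  "zero_diag = (\<lambda>_. 0)"

definition card_diag :: "'a fsum \<Rightarrow> enat" where
  "card_diag \<alpha> = usum \<alpha> UNIV"

definition restrict_diag :: "'a fsum \<Rightarrow> 'a set \<Rightarrow> 'a fsum" where
  "restrict_diag \<alpha> S = (\<lambda>x. if x \<in> S then \<alpha> x else 0)"

definition u_part :: "('a \<Rightarrow> 'a \<Rightarrow> ennreal) \<Rightarrow> 'a set \<Rightarrow> ennreal \<Rightarrow> 'a fsum \<Rightarrow> 'a fsum" where
  "u_part d A \<delta> \<alpha> = restrict_diag \<alpha> (- thick d A \<delta>)"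

definition l_part :: "('a \<Rightarrow> 'a \<Rightarrow> ennreal) \<Rightarrow> 'a set \<Rightarrow> ennreal \<Rightarrow> 'a fsum \<Rightarrow> 'a fsum" where
  "l_part d A \<delta> \<alpha> = restrict_diag \<alpha> (thick d A \<delta> - A)"

text \<open>A matching of \<alpha> and \<beta> is a countable formal sum of pairs (again given by
  multiplicities) such that no pair has both coordinates in A, the coordinates
  outside A of first components form \<alpha>, and those of second components form \<beta>.
  (First coordinates in A are the z_i, second coordinates in A are the w_j.)\<close>
definition is_matching :: "'a set \<Rightarrow> 'a fsum \<Rightarrow> 'a fsum \<Rightarrow> ('a \<times> 'a) fsum \<Rightarrow> bool" where
  "is_matching A \<alpha> \<beta> \<mu> \<longleftrightarrow> countable (supp \<mu>)
     \<and> (\<forall>x y. \<mu> (x, y) \<noteq> 0 \<longrightarrow> \<not> (x \<in> A \<and> y \<in> A))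
     \<and> (\<forall>x. x \<notin> A \<longrightarrow> usum (\<lambda>y. \<mu> (x, y)) UNIV = \<alpha> x)
     \<and> (\<forall>y. y \<notin> A \<longrightarrow> usum (\<lambda>x. \<mu> (x, y)) UNIV = \<beta> y)"

definition enn_powr :: "ennreal \<Rightarrow> real \<Rightarrow> ennreal" where
  "enn_powr x r = (if x = top then top else ennreal (enn2real x powr r))"

definition match_cost :: "ennreal \<Rightarrow> ('a \<Rightarrow> 'a \<Rightarrow> ennreal) \<Rightarrow> ('a \<times> 'a) fsum \<Rightarrow> ennreal" where
  "match_cost p d \<mu> =
     (if p = top then (SUP z\<in>supp \<mu>. d (fst z) (snd z))
      else enn_powr (usum (\<lambda>z. ennreal_of_enat (\<mu> z) * enn_powr (d (fst z) (snd z)) (enn2real p)) UNIV)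
                    (1 / enn2real p))"

definition W :: "ennreal \<Rightarrow> ('a \<Rightarrow> 'a \<Rightarrow> ennreal) \<Rightarrow> 'a set \<Rightarrow> 'a fsum \<Rightarrow> 'a fsum \<Rightarrow> ennreal" where
  "W p d A \<alpha> \<beta> = (INF \<mu>\<in>{\<mu>. is_matching A \<alpha> \<beta> \<mu>}. match_cost p d \<mu>)"

definition Dbar_p :: "ennreal \<Rightarrow> ('a \<Rightarrow> 'a \<Rightarrow> ennreal) \<Rightarrow> 'a set \<Rightarrow> 'a fsum set" where
  "Dbar_p p d A =
     (if p = top then {\<alpha>\<in>Dbar A. \<forall>\<delta>>0. card_diag (u_part d A \<delta> \<alpha>) < \<infinity>}
      else {\<alpha>\<in>Dbar A. card_diag (u_part d A top \<alpha>) < \<infinity>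
                        \<and> W p d A (l_part d A top \<alpha>) zero_diag < top})"

end

(*
  Every W_p-ball around the empty diagram 0 escapes every compact set; then a sequence
  converging to 0 that escapes the n-th member of a countable family of compact sets,
  together with its limit, is a compact set contained in no member of the family.

  Since A is not isolated, for every e > 0 there are points x_k with d(x_k, A) = r_k and
  multiplicities m_k -> oo such that the diagrams m_k x_k lie within W_p-distance e of 0 while
  m_k r_k^p stays bounded below (for p = oo a single point x with m_k = k + 1 will do).
  Let U_K consist of the diagrams having, for all k >= K, at most a fraction theta < 1/2 of m_k
  points farther than l r_k from A, for some l < 1.  These sets are open, because a matching of
  p-cost t moves at most (t/s)^p points by more than s (Markov's inequality); they cover the
  space, because a diagram of D_p has at most G + eps c^-p points farther than c from A, for
  every eps > 0; and m_j x_j lies outside U_K whenever K <= j.  So no compact set contains all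
  the m_j x_j.
*)
theory Submission
  imports Defs
begin

lemma istopology_dist_balls:
  fixes \<rho> :: "'b \<Rightarrow> 'b \<Rightarrow> ennreal"
  shows "istopology (\<lambda>U. U \<subseteq> S \<and> (\<forall>x\<in>U. \<exists>e>0. {y\<in>S. \<rho> x y < e} \<subseteq> U))"
  unfolding istopology_def
proof (rule conjI; intro allI impI)
  fix U V
  assume U: "U \<subseteq> S \<and> (\<forall>x\<in>U. \<exists>e>0. {y\<in>S. \<rho> x y < e} \<subseteq> U)"
    and V: "V \<subseteq> S \<and> (\<forall>x\<in>V. \<exists>e>0. {y\<in>S. \<rho> x y < e} \<subseteq> V)"
  show "U \<inter> V \<subseteq> S \<and> (\<forall>x\<in>U \<inter> V. \<exists>e>0. {y\<in>S. \<rho> x y < e} \<subseteq> U \<inter> V)"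
  proof (intro conjI ballI)
    fix x assume "x \<in> U \<inter> V"
    then obtain e1 e2 where "e1 > 0" "{y\<in>S. \<rho> x y < e1} \<subseteq> U" "e2 > 0" "{y\<in>S. \<rho> x y < e2} \<subseteq> V"
      using U V by blast
    then show "\<exists>e>0. {y\<in>S. \<rho> x y < e} \<subseteq> U \<inter> V"
      by (intro exI[of _ "min e1 e2"]) auto
  qed (use U in auto)
next
  fix K :: "'b set set"
  assume "\<forall>U\<in>K. U \<subseteq> S \<and> (\<forall>x\<in>U. \<exists>e>0. {y\<in>S. \<rho> x y < e} \<subseteq> U)"
  then show "\<Union>K \<subseteq> S \<and> (\<forall>x\<in>\<Union>K. \<exists>e>0. {y\<in>S. \<rho> x y < e} \<subseteq> \<Union>K)"
    by (meson Union_iff Union_least Union_upper order_trans)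
qed

lemma openin_dist_topology:
  fixes \<rho> :: "'b \<Rightarrow> 'b \<Rightarrow> ennreal"
  shows "openin (dist_topology S \<rho>) U \<longleftrightarrow> U \<subseteq> S \<and> (\<forall>x\<in>U. \<exists>e>0. {y\<in>S. \<rho> x y < e} \<subseteq> U)"
  unfolding dist_topology_def using istopology_dist_balls[of S \<rho>] by simp

lemma topspace_dist_topology [simp]:
  fixes \<rho> :: "'b \<Rightarrow> 'b \<Rightarrow> ennreal"
  shows "topspace (dist_topology S \<rho>) = S"
proof -
  have "openin (dist_topology S \<rho>) S"
    unfolding openin_dist_topology by (auto intro: exI[of _ 1])
  then show ?thesis
    unfolding topspace_def using openin_dist_topology[of S \<rho>] by auto
qed

lemma limitin_dist_topology:
  fixes \<rho> :: "'b \<Rightarrow> 'b \<Rightarrow> ennreal"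
  assumes "z \<in> S" and "range \<alpha> \<subseteq> S" and "(\<lambda>n. \<rho> z (\<alpha> n)) \<longlonglongrightarrow> 0"
  shows "limitin (dist_topology S \<rho>) \<alpha> z sequentially"
proof -
  have "\<forall>\<^sub>F n in sequentially. \<alpha> n \<in> U" if U: "openin (dist_topology S \<rho>) U" "z \<in> U" for U
  proof -
    obtain e where "e > 0" "{y\<in>S. \<rho> z y < e} \<subseteq> U"
      using U unfolding openin_dist_topology by blast
    then show ?thesis
      using order_tendstoD(2)[OF assms(3) \<open>e > 0\<close>] assms(2) by (auto elim!: eventually_mono)
  qed
  then show ?thesis
    using assms(1) by (simp add: limitin_def)
qed

lemma not_hemicompact_dist_topology:
  fixes \<rho> :: "'b \<Rightarrow> 'b \<Rightarrow> ennreal"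
  assumes "z \<in> S"
    and escape: "\<And>e K. e > 0 \<Longrightarrow> compactin (dist_topology S \<rho>) K \<Longrightarrow> \<exists>\<alpha>\<in>S. \<rho> z \<alpha> < e \<and> \<alpha> \<notin> K"
  shows "\<not> hemicompact (dist_topology S \<rho>)"
proof
  assume "hemicompact (dist_topology S \<rho>)"
  then obtain K :: "nat \<Rightarrow> 'b set" where K: "\<And>n. compactin (dist_topology S \<rho>) (K n)"
    and absorb: "\<And>C. compactin (dist_topology S \<rho>) C \<Longrightarrow> \<exists>n. C \<subseteq> K n"
    unfolding hemicompact_def by blast
  have "\<forall>n. \<exists>\<alpha>\<in>S. \<rho> z \<alpha> < ennreal (inverse (Suc n)) \<and> \<alpha> \<notin> K n"
  proof
    fix n
    have "ennreal (inverse (Suc n)) > 0"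
      by (simp del: of_nat_Suc)
    then show "\<exists>\<alpha>\<in>S. \<rho> z \<alpha> < ennreal (inverse (Suc n)) \<and> \<alpha> \<notin> K n"
      using escape K by blast
  qed
  then obtain \<alpha> where \<alpha>: "\<And>n. \<alpha> n \<in> S" "\<And>n. \<rho> z (\<alpha> n) < ennreal (inverse (Suc n))"
    "\<And>n. \<alpha> n \<notin> K n"
    by metis
  have lim: "(\<lambda>n. ennreal (inverse (Suc n))) \<longlonglongrightarrow> 0"
    using tendsto_ennrealI[OF LIMSEQ_inverse_real_of_nat] by simp
  have upper: "\<forall>\<^sub>F n in sequentially. \<rho> z (\<alpha> n) \<le> ennreal (inverse (Suc n))"
    using \<alpha>(2) by (intro always_eventually allI less_imp_le)
  have "(\<lambda>n. \<rho> z (\<alpha> n)) \<longlonglongrightarrow> 0"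
    using tendsto_sandwich[OF _ upper tendsto_const lim] by simp
  then have "compactin (dist_topology S \<rho>) (insert z (range \<alpha>))"
    using \<alpha>(1) assms(1) by (intro compactin_sequence_with_limit limitin_dist_topology) auto
  then obtain n where "insert z (range \<alpha>) \<subseteq> K n"
    using absorb by blast
  then show False
    using \<alpha>(3)[of n] by auto
qed

lemma compactin_omits_escaping_sequence:
  fixes U :: "nat \<Rightarrow> 'b set"
  assumes "compactin X K" and "\<And>i. openin X (U i)" and "K \<subseteq> (\<Union>i. U i)"
    and "\<And>i j. i \<le> j \<Longrightarrow> \<alpha> j \<notin> U i"
  shows "\<exists>j. \<alpha> j \<notin> K"
proof -
  obtain F where "finite F" "F \<subseteq> range U" "K \<subseteq> \<Union>F"
    using assms(1-3) unfolding compactin_def by (metis imageE)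
  then obtain I where I: "finite I" "K \<subseteq> (\<Union>i\<in>I. U i)"
    by (metis finite_subset_image)
  define j where "j = Max (insert 0 I)"
  have "\<alpha> j \<notin> U i" if "i \<in> I" for i
    using assms(4) I(1) that unfolding j_def by simp
  then show ?thesis
    using I(2) by blast
qed

lemma usum_upper: "finite F \<Longrightarrow> F \<subseteq> S \<Longrightarrow> sum f F \<le> usum f S"
  unfolding usum_def by (rule SUP_upper) auto

lemma usum_least: "(\<And>F. finite F \<Longrightarrow> F \<subseteq> S \<Longrightarrow> sum f F \<le> B) \<Longrightarrow> usum f S \<le> B"
  unfolding usum_def by (rule SUP_least) auto

lemma usum_eq_sum:
  fixes f :: "'b \<Rightarrow> 'c::{complete_lattice, canonically_ordered_monoid_add}"
  assumes "finite F0" and "\<And>z. z \<notin> F0 \<Longrightarrow> f z = 0"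
  shows "usum f UNIV = sum f F0"
proof (rule antisym)
  show "usum f UNIV \<le> sum f F0"
  proof (rule usum_least)
    fix F :: "'b set" assume "finite F"
    then have "sum f F = sum f (F \<inter> F0)"
      using assms(2) by (intro sum.mono_neutral_right) auto
    also have "\<dots> \<le> sum f F0"
      using assms(1) by (intro sum_mono2) auto
    finally show "sum f F \<le> sum f F0" .
  qed
qed (use assms(1) usum_upper in auto)

lemma usum_eq_single:
  fixes f :: "'b \<Rightarrow> 'c::{complete_lattice, canonically_ordered_monoid_add}"
  assumes "\<And>z. z \<noteq> z0 \<Longrightarrow> f z = 0"
  shows "usum f UNIV = f z0"
  using usum_eq_sum[of "{z0}" f] assms by auto

lemma usum_zero [simp]: "usum (\<lambda>_. 0::'c::{complete_lattice, canonically_ordered_monoid_add}) S = 0"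
  by (rule antisym[OF usum_least]) auto

lemma usum_tail_le:
  fixes g :: "'b \<Rightarrow> ennreal"
  assumes "usum g UNIV < top" and "0 < \<epsilon>"
  obtains F where "finite F" "\<And>Q. finite Q \<Longrightarrow> Q \<inter> F = {} \<Longrightarrow> sum g Q \<le> ennreal \<epsilon>"
proof -
  define C where "C = usum g UNIV"
  have "C < C + ennreal \<epsilon>"
    using ennreal_add_left_cancel_less[of C 0 "ennreal \<epsilon>"] assms unfolding C_def by simp
  also have "\<dots> = (SUP F\<in>{F. finite F}. sum g F + ennreal \<epsilon>)"
    unfolding C_def usum_def by (subst ennreal_SUP_add_left) auto
  finally obtain F where F: "finite F" "C < sum g F + ennreal \<epsilon>"
    by (auto simp: less_SUP_iff)
  have "sum g Q \<le> ennreal \<epsilon>" if Q: "finite Q" "Q \<inter> F = {}" for Q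
  proof -
    have "sum g F + sum g Q = sum g (F \<union> Q)"
      using Q F(1) by (simp add: sum.union_disjoint Int_commute)
    also have "\<dots> \<le> C"
      unfolding C_def using Q(1) F(1) by (intro usum_upper) auto
    also have "\<dots> < sum g F + ennreal \<epsilon>"
      by (rule F(2))
    finally show ?thesis
      by (simp add: ennreal_add_left_cancel_less less_imp_le)
  qed
  then show ?thesis
    using that F(1) by blast
qed

lemma enat_le_usumE:
  fixes f :: "'b \<Rightarrow> enat"
  assumes "enat n \<le> usum f S"
  obtains F where "finite F" "F \<subseteq> S" "enat n \<le> sum f F"
proof (cases n)
  case 0
  then show ?thesis using that[of "{}"] by (simp add: zero_enat_def)
next
  case (Suc m)
  then have "enat m < usum f S"
    using assms Suc_ile_eq by blast
  then obtain F where "finite F" "F \<subseteq> S" "enat m < sum f F"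
    unfolding usum_def by (auto simp: less_SUP_iff)
  then show ?thesis
    using that Suc Suc_ile_eq by blast
qed

lemma enat_le_addE:
  fixes a b :: enat
  assumes "enat n \<le> a + b"
  obtains n1 n2 where "n = n1 + n2" "enat n1 \<le> a" "enat n2 \<le> b"
proof (cases a)
  case infinity
  then show ?thesis using that[of n 0] by (simp add: zero_enat_def[symmetric])
next
  case (enat a')
  show ?thesis
  proof (cases b)
    case infinity
    then show ?thesis using that[of 0 n] by (simp add: zero_enat_def[symmetric])
  next
    case (enat b')
    show ?thesis
      by (rule that[of "min n a'" "n - min n a'"]) (use assms \<open>a = enat a'\<close> enat in auto)
  qed
qed

lemma enat_le_sum_usum:
  fixes g :: "'x \<Rightarrow> 'y \<Rightarrow> enat"
  assumes "finite Y" and "\<And>y. y \<in> Y \<Longrightarrow> usum (\<lambda>x. g x y) UNIV = h y"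
    and "enat n \<le> sum h Y"
  shows "\<exists>X. finite X \<and> enat n \<le> (\<Sum>y\<in>Y. \<Sum>x\<in>X. g x y)"
  using assms
proof (induction Y arbitrary: n rule: finite_induct)
  case empty
  then show ?case by auto
next
  case (insert y Y)
  have "enat n \<le> h y + sum h Y"
    using insert.prems(2) insert.hyps by simp
  then obtain n1 n2 where n: "n = n1 + n2" "enat n1 \<le> h y" "enat n2 \<le> sum h Y"
    by (rule enat_le_addE)
  have "enat n1 \<le> usum (\<lambda>x. g x y) UNIV"
    using n(2) insert.prems(1)[of y] by simp
  then obtain X1 where X1: "finite X1" "enat n1 \<le> (\<Sum>x\<in>X1. g x y)"
    by (rule enat_le_usumE)
  obtain X2 where X2: "finite X2" "enat n2 \<le> (\<Sum>y\<in>Y. \<Sum>x\<in>X2. g x y)"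
    using insert.IH[of n2] insert.prems(1) n(3) by blast
  have "(\<Sum>x\<in>X1. g x y) \<le> (\<Sum>x\<in>X1 \<union> X2. g x y)"
    using X1(1) X2(1) by (intro sum_mono2) auto
  moreover have "(\<Sum>y\<in>Y. \<Sum>x\<in>X2. g x y) \<le> (\<Sum>y\<in>Y. \<Sum>x\<in>X1 \<union> X2. g x y)"
    using X1(1) X2(1) by (intro sum_mono sum_mono2) auto
  moreover have "enat n = enat n1 + enat n2"
    using n(1) by simp
  ultimately have "enat n \<le> (\<Sum>x\<in>X1 \<union> X2. g x y) + (\<Sum>y\<in>Y. \<Sum>x\<in>X1 \<union> X2. g x y)"
    using X1(2) X2(2) by (metis add_mono order_trans)
  then show ?case
    using insert.hyps X1(1) X2(1) by (intro exI[of _ "X1 \<union> X2"]) simp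
qed

definition mass_le :: "'b fsum \<Rightarrow> 'b set \<Rightarrow> real \<Rightarrow> bool" where
  "mass_le \<gamma> S b \<longleftrightarrow> (\<forall>Y n. finite Y \<longrightarrow> Y \<subseteq> S \<longrightarrow> enat n \<le> sum \<gamma> Y \<longrightarrow> real n \<le> b)"

lemma mass_leI:
  "(\<And>Y n. finite Y \<Longrightarrow> Y \<subseteq> S \<Longrightarrow> enat n \<le> sum \<gamma> Y \<Longrightarrow> real n \<le> b) \<Longrightarrow> mass_le \<gamma> S b"
  unfolding mass_le_def by blast

lemma mass_leD: "mass_le \<gamma> S b \<Longrightarrow> finite Y \<Longrightarrow> Y \<subseteq> S \<Longrightarrow> enat n \<le> sum \<gamma> Y \<Longrightarrow> real n \<le> b"
  unfolding mass_le_def by blast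

lemma mass_le_empty: "mass_le \<gamma> {} 0"
  by (rule mass_leI) (simp add: zero_enat_def)

lemma mass_le_mono:
  assumes "mass_le \<gamma> S b" and "T \<inter> supp \<gamma> \<subseteq> S" and "b \<le> b'"
  shows "mass_le \<gamma> T b'"
proof (rule mass_leI)
  fix Y n assume Y: "finite Y" "Y \<subseteq> T" "enat n \<le> sum \<gamma> Y"
  have "sum \<gamma> Y = sum \<gamma> (Y \<inter> supp \<gamma>)"
    using Y(1) by (intro sum.mono_neutral_right) (auto simp: supp_def)
  moreover have "Y \<inter> supp \<gamma> \<subseteq> S"
    using Y(2) assms(2) by blast
  ultimately show "real n \<le> b'"
    using mass_leD[OF assms(1), of "Y \<inter> supp \<gamma>" n] Y(1,3) assms(3) by simp
qed

lemma mass_le_subset: "mass_le \<gamma> S b \<Longrightarrow> T \<subseteq> S \<Longrightarrow> mass_le \<gamma> T b"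
  by (rule mass_le_mono) auto

lemma mass_le_cong:
  assumes "\<And>x. x \<in> S \<Longrightarrow> \<gamma> x = \<gamma>' x" and "mass_le \<gamma> S b"
  shows "mass_le \<gamma>' S b"
proof (rule mass_leI)
  fix Y n assume "finite Y" "Y \<subseteq> S" "enat n \<le> sum \<gamma>' Y"
  moreover have "sum \<gamma>' Y = sum \<gamma> Y"
    using \<open>Y \<subseteq> S\<close> assms(1) by (intro sum.cong) auto
  ultimately show "real n \<le> b"
    using mass_leD[OF assms(2)] by simp
qed

lemma mass_le_Un:
  assumes "mass_le \<gamma> S b" and "mass_le \<gamma> T c"
  shows "mass_le \<gamma> (S \<union> T) (b + c)"
proof (rule mass_leI)
  fix Y n assume Y: "finite Y" "Y \<subseteq> S \<union> T" "enat n \<le> sum \<gamma> Y"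
  then have "enat n \<le> sum \<gamma> (Y \<inter> S) + sum \<gamma> (Y - S)"
    by (simp add: sum.Int_Diff[symmetric])
  then obtain n1 n2 where n: "n = n1 + n2" "enat n1 \<le> sum \<gamma> (Y \<inter> S)" "enat n2 \<le> sum \<gamma> (Y - S)"
    by (rule enat_le_addE)
  have "real n1 \<le> b"
    using mass_leD[OF assms(1) _ _ n(2)] Y(1) by simp
  moreover have "real n2 \<le> c"
    using mass_leD[OF assms(2) _ _ n(3)] Y(1,2) by auto
  ultimately show "real n \<le> b + c"
    using n(1) by simp
qed

lemma mass_le_usum:
  assumes "usum \<gamma> S \<le> enat N"
  shows "mass_le \<gamma> S N"
proof (rule mass_leI)
  fix Y n assume "finite Y" "Y \<subseteq> S" "enat n \<le> sum \<gamma> Y"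
  then have "enat n \<le> enat N"
    using usum_upper[of Y S \<gamma>] assms by (meson order_trans)
  then show "real n \<le> real N"
    by simp
qed

lemma mass_le_snd_marginal:
  assumes "is_matching A \<alpha> \<beta> \<mu>" and "S \<inter> A = {}" and "mass_le \<mu> (UNIV \<times> S) b"
  shows "mass_le \<beta> S b"
proof (rule mass_leI)
  fix Y n assume Y: "finite Y" "Y \<subseteq> S" "enat n \<le> sum \<beta> Y"
  have marginal: "usum (\<lambda>x. \<mu> (x, y)) UNIV = \<beta> y" if "y \<in> Y" for y
    using assms(1,2) Y(2) that unfolding is_matching_def by blast
  obtain X where X: "finite X" "enat n \<le> (\<Sum>y\<in>Y. \<Sum>x\<in>X. \<mu> (x, y))"
    using enat_le_sum_usum[where g = "\<lambda>x y. \<mu> (x, y)", OF Y(1) marginal Y(3)] by blast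
  have "(\<Sum>y\<in>Y. \<Sum>x\<in>X. \<mu> (x, y)) = sum \<mu> (X \<times> Y)"
    by (subst sum.swap) (simp add: sum.cartesian_product)
  moreover have "X \<times> Y \<subseteq> UNIV \<times> S"
    using Y(2) by auto
  ultimately show "real n \<le> b"
    using mass_leD[OF assms(3) _ _ , of "X \<times> Y" n] X Y(1) by simp
qed

lemma mass_le_fst_marginal:
  assumes "is_matching A \<alpha> \<beta> \<mu>" and "S \<inter> A = {}" and "mass_le \<mu> (S \<times> UNIV) b"
  shows "mass_le \<alpha> S b"
proof (rule mass_leI)
  fix Y n assume Y: "finite Y" "Y \<subseteq> S" "enat n \<le> sum \<alpha> Y"
  have marginal: "usum (\<lambda>y. \<mu> (x, y)) UNIV = \<alpha> x" if "x \<in> Y" for x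
    using assms(1,2) Y(2) that unfolding is_matching_def by blast
  obtain Z where Z: "finite Z" "enat n \<le> (\<Sum>x\<in>Y. \<Sum>y\<in>Z. \<mu> (x, y))"
    using enat_le_sum_usum[where g = "\<lambda>y x. \<mu> (x, y)", OF Y(1) marginal Y(3)] by blast
  moreover have "Y \<times> Z \<subseteq> S \<times> UNIV"
    using Y(2) by auto
  ultimately show "real n \<le> b"
    using mass_leD[OF assms(3) _ _ , of "Y \<times> Z" n] Y(1) by (simp add: sum.cartesian_product)
qed

lemma mass_le_pairs_fst:
  assumes "is_matching A \<alpha> \<beta> \<mu>" and "S \<inter> A = {}" and "mass_le \<alpha> S b"
  shows "mass_le \<mu> (S \<times> UNIV) b"
proof (rule mass_leI)
  fix Q n assume Q: "finite Q" "Q \<subseteq> S \<times> UNIV" "enat n \<le> sum \<mu> Q"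
  have QS: "fst ` Q \<subseteq> S"
    using Q(2) by auto
  have "sum \<mu> Q \<le> sum \<mu> (fst ` Q \<times> snd ` Q)"
    by (rule sum_mono2) (simp_all add: Q(1) subset_fst_snd)
  also have "\<dots> = (\<Sum>x\<in>fst ` Q. \<Sum>y\<in>snd ` Q. \<mu> (x, y))"
    by (simp add: sum.cartesian_product)
  also have "\<dots> \<le> sum \<alpha> (fst ` Q)"
  proof (rule sum_mono)
    fix x assume "x \<in> fst ` Q"
    then have "x \<notin> A"
      using QS assms(2) by blast
    then have marginal: "usum (\<lambda>y. \<mu> (x, y)) UNIV = \<alpha> x"
      using assms(1) unfolding is_matching_def by blast
    have "(\<Sum>y\<in>snd ` Q. \<mu> (x, y)) \<le> usum (\<lambda>y. \<mu> (x, y)) UNIV"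
      by (rule usum_upper) (simp_all add: Q(1))
    then show "(\<Sum>y\<in>snd ` Q. \<mu> (x, y)) \<le> \<alpha> x"
      by (simp only: marginal)
  qed
  finally have "enat n \<le> sum \<alpha> (fst ` Q)"
    using Q(3) by (rule order_trans[rotated])
  then show "real n \<le> b"
    using mass_leD[OF assms(3) _ QS] Q(1) by blast
qed

lemma setdist_le: "a \<in> A \<Longrightarrow> setdist d x A \<le> d x a"
  unfolding setdist_def by (rule INF_lower)

lemma setdist_eq_0: "ext_metric d \<Longrightarrow> a \<in> A \<Longrightarrow> setdist d a A = 0"
  using setdist_le[of a A d a] unfolding ext_metric_def by simp

lemma setdist_triangle:
  assumes "ext_metric d"
  shows "setdist d y A \<le> d y x + setdist d x A"
proof (cases "d y x = top")
  case False
  have "setdist d y A - d y x \<le> setdist d x A"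
    unfolding setdist_def[of d x A]
  proof (rule INF_greatest)
    fix a assume "a \<in> A"
    then have "setdist d y A \<le> d y a"
      by (rule setdist_le)
    also have "\<dots> \<le> d y x + d x a"
      using assms unfolding ext_metric_def by blast
    finally show "setdist d y A - d y x \<le> d x a"
      using False by (simp add: ennreal_minus_le_iff)
  qed
  then show ?thesis
    using False by (simp add: ennreal_minus_le_iff)
qed simp

lemma setdist_pos:
  assumes "metric_pair d A" and "x \<notin> A"
  shows "0 < setdist d x A"
proof -
  have "openin (dist_topology UNIV d) (- A)"
    using assms(1) unfolding metric_pair_def closedin_def by (simp add: Compl_eq_Diff_UNIV)
  then obtain e where e: "e > 0" "{y. d x y < e} \<subseteq> - A"
    using assms(2) unfolding openin_dist_topology by auto
  have "e \<le> setdist d x A"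
    unfolding setdist_def using e(2) by (intro INF_greatest) (auto simp: not_less[symmetric])
  then show ?thesis
    using e(1) by simp
qed

lemma setdist_uniform_lower_bound:
  assumes "metric_pair d A" and "finite X" and "X \<inter> A = {}"
  obtains \<eta> where "0 < \<eta>" "\<And>x. x \<in> X \<Longrightarrow> ennreal \<eta> \<le> setdist d x A"
proof -
  define b where "b = Min (insert 1 ((\<lambda>x. setdist d x A) ` X))"
  have "0 < b"
    unfolding b_def using assms setdist_pos[OF assms(1)] by auto
  moreover have "b \<le> 1"
    unfolding b_def using assms(2) by simp
  then have "b < top"
    using ennreal_one_less_top by (rule le_less_trans)
  ultimately have "0 < enn2real b" "ennreal (enn2real b) = b"
    by (simp_all add: enn2real_positive_iff)
  moreover have "b \<le> setdist d x A" if "x \<in> X" for x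
    unfolding b_def using assms(2) that by simp
  ultimately show ?thesis
    using that[of "enn2real b"] by simp
qed

lemma close_pair_near_boundary:
  assumes "metric_pair d A" and "\<not> isolated_set d A" and "0 < e"
  obtains x a r where "x \<notin> A" "a \<in> A" "d x a < e" "d x a < top" "0 < r"
    "setdist d x A = ennreal r" "d x a < ennreal (2 * r)"
proof -
  have em: "ext_metric d"
    using assms(1) unfolding metric_pair_def by simp
  have "A \<subseteq> thick d A (min e 1)"
    unfolding thick_def using setdist_eq_0[OF em] assms(3) by auto
  moreover have "thick d A (min e 1) \<noteq> A"
    using assms(2,3) unfolding isolated_set_def by (metis min_less_iff_conj zero_less_one)
  ultimately obtain x where x: "x \<notin> A" "setdist d x A < min e 1"
    unfolding thick_def by auto
  then have "setdist d x A < 1"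
    by simp
  then have fin: "setdist d x A < top"
    using ennreal_one_less_top by (rule order.strict_trans)
  define r where "r = enn2real (setdist d x A)"
  have sr: "setdist d x A = ennreal r"
    unfolding r_def using fin by simp
  have r0: "0 < r"
    unfolding r_def using setdist_pos[OF assms(1) x(1)] fin by (simp add: enn2real_positive_iff)
  have "setdist d x A < min (min e 1) (ennreal (2 * r))"
    using x(2) sr r0 by (simp add: ennreal_lessI)
  then have "\<exists>a\<in>A. d x a < min (min e 1) (ennreal (2 * r))"
    unfolding setdist_def by (simp only: INF_less_iff)
  then obtain a where a: "a \<in> A" "d x a < min (min e 1) (ennreal (2 * r))"
    by blast
  then have "d x a < 1"
    by simp
  then have "d x a < top"
    using ennreal_one_less_top by (rule order.strict_trans)
  then show ?thesis
    using that x a sr r0 by simp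
qed

definition far_from :: "('a \<Rightarrow> 'a \<Rightarrow> ennreal) \<Rightarrow> 'a set \<Rightarrow> real \<Rightarrow> 'a set" where
  "far_from d A c = {y. ennreal c < setdist d y A}"

lemma far_from_disjoint: "ext_metric d \<Longrightarrow> far_from d A c \<inter> A = {}"
  unfolding far_from_def using setdist_eq_0 by fastforce

lemma far_from_displacement:
  assumes "ext_metric d" and "0 \<le> s" "s \<le> c"
    and "y \<in> far_from d A c" and "x \<notin> far_from d A (c - s)"
  shows "ennreal s \<le> d x y"
proof (rule ccontr)
  assume "\<not> ennreal s \<le> d x y"
  then have "d y x \<le> ennreal s"
    using assms(1) unfolding ext_metric_def by (metis linorder_not_le order_less_imp_le)
  have "ennreal c < setdist d y A"
    using assms(4) unfolding far_from_def by simp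
  also have "\<dots> \<le> d y x + setdist d x A"
    using assms(1) by (rule setdist_triangle)
  also have "\<dots> \<le> ennreal s + ennreal (c - s)"
    using \<open>d y x \<le> ennreal s\<close> assms(5) unfolding far_from_def by (intro add_mono) auto
  also have "\<dots> = ennreal c"
    using assms(2,3) by (simp flip: ennreal_plus)
  finally show False
    by simp
qed

lemma far_from_margins:
  fixes l r :: real
  assumes "0 < l" and "l < 1" and "0 < r"
  shows "0 < (1 - l) / 2 * r" "(1 - l) / 2 * r \<le> (1 + l) / 2 * r"
    "(1 + l) / 2 * r - (1 - l) / 2 * r = l * r"
  using assms by (simp_all add: field_simps)

lemma mass_le_far_from_transport:
  assumes "ext_metric d" and "is_matching A \<gamma> \<gamma>' \<mu>" and "0 \<le> s" "s \<le> c"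
    and "mass_le \<gamma> (far_from d A (c - s)) b"
    and "mass_le \<mu> {z. ennreal s \<le> d (fst z) (snd z)} b'"
  shows "mass_le \<gamma>' (far_from d A c) (b + b')"
proof -
  have "mass_le \<mu> (far_from d A (c - s) \<times> UNIV) b"
    by (rule mass_le_pairs_fst[OF assms(2) far_from_disjoint[OF assms(1)] assms(5)])
  then have "mass_le \<mu> (far_from d A (c - s) \<times> UNIV \<union> {z. ennreal s \<le> d (fst z) (snd z)}) (b + b')"
    using assms(6) by (rule mass_le_Un)
  moreover have "UNIV \<times> far_from d A c
      \<subseteq> far_from d A (c - s) \<times> UNIV \<union> {z. ennreal s \<le> d (fst z) (snd z)}"
    using far_from_displacement[OF assms(1,3,4), of _ A] by fastforce
  ultimately have "mass_le \<mu> (UNIV \<times> far_from d A c) (b + b')"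
    by (rule mass_le_subset)
  then show ?thesis
    by (rule mass_le_snd_marginal[OF assms(2) far_from_disjoint[OF assms(1)]])
qed

definition powr_cost :: "real \<Rightarrow> ('a \<Rightarrow> 'a \<Rightarrow> ennreal) \<Rightarrow> ('a \<times> 'a) fsum \<Rightarrow> ennreal" where
  "powr_cost q d \<mu> = usum (\<lambda>z. ennreal_of_enat (\<mu> z) * enn_powr (d (fst z) (snd z)) q) UNIV"

lemma match_cost_eq_powr_cost:
  "p \<noteq> top \<Longrightarrow> match_cost p d \<mu> = enn_powr (powr_cost (enn2real p) d \<mu>) (1 / enn2real p)"
  unfolding match_cost_def powr_cost_def by simp

lemma enn_powr_mono:
  assumes "ennreal s \<le> D" and "0 \<le> s" and "0 \<le> q"
  shows "ennreal (s powr q) \<le> enn_powr D q"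
proof (cases "D = top")
  case False
  then have "s \<le> enn2real D"
    using assms(1,2) by (metis ennreal_le_iff enn2real_nonneg ennreal_enn2real_if)
  then show ?thesis
    using False assms(2,3) unfolding enn_powr_def by (auto intro!: ennreal_leI powr_mono2)
qed (simp add: enn_powr_def)

lemma powr_cost_le_of_match_cost:
  assumes "match_cost p d \<mu> < ennreal t" and "p \<noteq> top" and "0 < enn2real p"
  shows "powr_cost (enn2real p) d \<mu> \<le> ennreal (t powr enn2real p)"
proof -
  define q where "q = enn2real p"
  define C where "C = powr_cost q d \<mu>"
  have cost: "match_cost p d \<mu> = enn_powr C (1 / q)"
    unfolding C_def q_def using assms(2) by (rule match_cost_eq_powr_cost)
  then have "C \<noteq> top"
    using assms(1) unfolding enn_powr_def by auto
  then have "enn2real C powr (1 / q) < t"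
    using cost assms(1) unfolding enn_powr_def by (simp add: ennreal_less_iff)
  then have "(enn2real C powr (1 / q)) powr q \<le> t powr q"
    using assms(3) unfolding q_def by (intro powr_mono2) auto
  then have "enn2real C \<le> t powr q"
    using assms(3) unfolding q_def by (simp add: powr_powr)
  then have "ennreal (enn2real C) \<le> ennreal (t powr q)"
    by (rule ennreal_leI)
  then show ?thesis
    using \<open>C \<noteq> top\<close> unfolding C_def q_def by (simp add: ennreal_enn2real_if)
qed

lemma powr_cost_restrict_le:
  assumes "\<And>Q. finite Q \<Longrightarrow> Q \<inter> F = {}
      \<Longrightarrow> (\<Sum>z\<in>Q. ennreal_of_enat (\<mu> z) * enn_powr (d (fst z) (snd z)) q) \<le> ennreal \<epsilon>"
  shows "powr_cost q d (restrict_diag \<mu> (- F)) \<le> ennreal \<epsilon>"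
  unfolding powr_cost_def
proof (rule usum_least)
  fix Q :: "('a \<times> 'a) set" assume "finite Q"
  have "(\<Sum>z\<in>Q. ennreal_of_enat (restrict_diag \<mu> (- F) z) * enn_powr (d (fst z) (snd z)) q)
      = (\<Sum>z\<in>Q - F. ennreal_of_enat (\<mu> z) * enn_powr (d (fst z) (snd z)) q)"
    using \<open>finite Q\<close> by (intro sum.mono_neutral_cong_right) (auto simp: restrict_diag_def)
  also have "\<dots> \<le> ennreal \<epsilon>"
    using \<open>finite Q\<close> by (intro assms) auto
  finally show "(\<Sum>z\<in>Q. ennreal_of_enat (restrict_diag \<mu> (- F) z) * enn_powr (d (fst z) (snd z)) q)
      \<le> ennreal \<epsilon>" .
qed

lemma mass_le_far_pairs_top:
  assumes "match_cost top d \<mu> < ennreal s"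
  shows "mass_le \<mu> {z. ennreal s \<le> d (fst z) (snd z)} 0"
proof (rule mass_le_mono[OF mass_le_empty])
  have "d (fst z) (snd z) < ennreal s" if "z \<in> supp \<mu>" for z
  proof -
    have "d (fst z) (snd z) \<le> match_cost top d \<mu>"
      unfolding match_cost_def using SUP_upper[OF that, of "\<lambda>z. d (fst z) (snd z)"] by simp
    then show ?thesis
      using assms by simp
  qed
  then show "{z. ennreal s \<le> d (fst z) (snd z)} \<inter> supp \<mu> \<subseteq> {}"
    by (auto simp: not_le[symmetric])
qed simp

lemma mass_le_far_pairs_powr:
  assumes "powr_cost q d \<mu> \<le> ennreal C" and "0 \<le> C" and "0 < s" and "0 \<le> q"
  shows "mass_le \<mu> {z. ennreal s \<le> d (fst z) (snd z)} (C / s powr q)"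
proof (rule mass_leI)
  fix Q n assume Q: "finite Q" "Q \<subseteq> {z. ennreal s \<le> d (fst z) (snd z)}" "enat n \<le> sum \<mu> Q"
  have "of_nat n \<le> ennreal_of_enat (sum \<mu> Q)"
    using Q(3) ennreal_of_enat_le_iff[of "enat n" "sum \<mu> Q"] by simp
  then have "ennreal (real n * s powr q) \<le> ennreal_of_enat (sum \<mu> Q) * ennreal (s powr q)"
    by (simp add: ennreal_mult ennreal_of_nat_eq_real_of_nat mult_right_mono)
  also have "\<dots> = (\<Sum>z\<in>Q. ennreal_of_enat (\<mu> z)) * ennreal (s powr q)"
    by simp
  also have "\<dots> = (\<Sum>z\<in>Q. ennreal_of_enat (\<mu> z) * ennreal (s powr q))"
    by (rule sum_distrib_right)
  also have "\<dots> \<le> (\<Sum>z\<in>Q. ennreal_of_enat (\<mu> z) * enn_powr (d (fst z) (snd z)) q)"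
    using Q(2) assms(3,4) by (intro sum_mono mult_left_mono enn_powr_mono) auto
  also have "\<dots> \<le> powr_cost q d \<mu>"
    unfolding powr_cost_def using Q(1) by (intro usum_upper) auto
  also have "\<dots> \<le> ennreal C"
    by (rule assms(1))
  finally have "real n * s powr q \<le> C"
    using assms(2) by (simp add: ennreal_le_iff)
  then show "real n \<le> C / s powr q"
    using assms(3) by (simp add: pos_le_divide_eq)
qed

lemma mass_le_far_from_perturb_top:
  assumes "ext_metric d" and "is_matching A \<gamma> \<gamma>' \<mu>"
    and "match_cost top d \<mu> < ennreal ((1 - l) / 2 * r)"
    and "0 < l" "l < 1" "0 < r" and "mass_le \<gamma> (far_from d A (l * r)) b"
  shows "mass_le \<gamma>' (far_from d A ((1 + l) / 2 * r)) b"
  using mass_le_far_from_transport[OF assms(1,2) _ _ _ mass_le_far_pairs_top[OF assms(3)]]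
    far_from_margins[OF assms(4-6)] assms(7) by simp

lemma mass_le_far_from_perturb_powr:
  assumes "ext_metric d" and "is_matching A \<gamma> \<gamma>' \<mu>"
    and "powr_cost q d \<mu> \<le> ennreal T" "0 \<le> T" "0 \<le> q"
    and "0 < l" "l < 1" "0 < r" and "mass_le \<gamma> (far_from d A (l * r)) b"
  shows "mass_le \<gamma>' (far_from d A ((1 + l) / 2 * r)) (b + T / ((1 - l) / 2 * r) powr q)"
  using mass_le_far_from_transport[OF assms(1,2) _ _ _ mass_le_far_pairs_powr[OF assms(3,4) _ assms(5)]]
    far_from_margins[OF assms(6-8)] assms(9) by simp

definition point_diag :: "'b \<Rightarrow> nat \<Rightarrow> 'b fsum" where
  "point_diag x m = (\<lambda>y. if y = x then enat m else 0)"

lemma supp_point_diag: "supp (point_diag x m) \<subseteq> {x}"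
  unfolding supp_def point_diag_def by auto

lemma countable_supp_point_diag: "countable (supp (point_diag x m))"
  using supp_point_diag countable_subset by (metis countable_empty countable_insert)

lemma is_matching_zero_point:
  assumes "x \<notin> A" "a \<in> A"
  shows "is_matching A zero_diag (point_diag x m) (point_diag (a, x) m)"
  unfolding is_matching_def
proof (intro conjI allI impI)
  fix u assume "u \<notin> A"
  then have "(\<lambda>y. point_diag (a, x) m (u, y)) = (\<lambda>_. 0)"
    using assms(2) unfolding point_diag_def by auto
  then show "usum (\<lambda>y. point_diag (a, x) m (u, y)) UNIV = zero_diag u"
    by (simp add: zero_diag_def)
next
  fix v
  have "usum (\<lambda>u. point_diag (a, x) m (u, v)) UNIV = point_diag (a, x) m (a, v)"
    by (rule usum_eq_single) (auto simp: point_diag_def)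
  then show "usum (\<lambda>u. point_diag (a, x) m (u, v)) UNIV = point_diag x m v"
    by (simp add: point_diag_def)
qed (use assms countable_supp_point_diag in \<open>auto simp: point_diag_def split: if_splits\<close>)

lemma is_matching_point_zero:
  assumes "x \<notin> A" "a \<in> A"
  shows "is_matching A (point_diag x m) zero_diag (point_diag (x, a) m)"
  unfolding is_matching_def
proof (intro conjI allI impI)
  fix v assume "v \<notin> A"
  then have "(\<lambda>u. point_diag (x, a) m (u, v)) = (\<lambda>_. 0)"
    using assms(2) unfolding point_diag_def by auto
  then show "usum (\<lambda>u. point_diag (x, a) m (u, v)) UNIV = zero_diag v"
    by (simp add: zero_diag_def)
next
  fix u
  have "usum (\<lambda>y. point_diag (x, a) m (u, y)) UNIV = point_diag (x, a) m (u, a)"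
    by (rule usum_eq_single) (auto simp: point_diag_def)
  then show "usum (\<lambda>y. point_diag (x, a) m (u, y)) UNIV = point_diag x m u"
    by (simp add: point_diag_def)
qed (use assms countable_supp_point_diag in \<open>auto simp: point_diag_def split: if_splits\<close>)

lemma is_matching_zero_zero: "is_matching A zero_diag zero_diag zero_diag"
  unfolding is_matching_def supp_def zero_diag_def by simp

lemma is_matching_zero_diag_support:
  assumes "is_matching A \<alpha> zero_diag \<mu>" and "\<mu> z \<noteq> 0"
  shows "snd z \<in> A" "fst z \<notin> A"
proof -
  show "snd z \<in> A"
  proof (rule ccontr)
    assume "snd z \<notin> A"
    then have "usum (\<lambda>x. \<mu> (x, snd z)) UNIV = 0"
      using assms(1) unfolding is_matching_def zero_diag_def by blast
    moreover have "\<mu> z \<le> usum (\<lambda>x. \<mu> (x, snd z)) UNIV"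
      using usum_upper[of "{fst z}" UNIV "\<lambda>x. \<mu> (x, snd z)"] by simp
    ultimately show False
      using assms(2) by simp
  qed
  then show "fst z \<notin> A"
    using assms unfolding is_matching_def by (metis prod.collapse)
qed

lemma mass_le_of_matching_to_zero:
  assumes "is_matching A \<alpha> zero_diag \<mu>" and "S \<inter> A = {}"
    and "\<And>x. x \<in> S \<Longrightarrow> ennreal s \<le> setdist d x A"
    and "mass_le \<nu> {z. ennreal s \<le> d (fst z) (snd z)} b"
    and "\<And>z. z \<in> S \<times> UNIV \<Longrightarrow> \<nu> z = \<mu> z"
  shows "mass_le \<alpha> S b"
proof (rule mass_le_fst_marginal[OF assms(1,2)])
  have "(S \<times> UNIV) \<inter> supp \<nu> \<subseteq> {z. ennreal s \<le> d (fst z) (snd z)}"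
  proof
    fix z assume z: "z \<in> (S \<times> UNIV) \<inter> supp \<nu>"
    then have "snd z \<in> A"
      using assms(5) is_matching_zero_diag_support(1)[OF assms(1)] by (auto simp: supp_def)
    have "ennreal s \<le> setdist d (fst z) A"
      using z assms(3) by auto
    also have "\<dots> \<le> d (fst z) (snd z)"
      using \<open>snd z \<in> A\<close> by (rule setdist_le)
    finally show "z \<in> {z. ennreal s \<le> d (fst z) (snd z)}"
      by simp
  qed
  then have "mass_le \<nu> (S \<times> UNIV) b"
    using mass_le_mono[OF assms(4)] by simp
  then show "mass_le \<mu> (S \<times> UNIV) b"
    by (rule mass_le_cong[rotated]) (rule assms(5))
qed

lemma W_le_match_cost: "is_matching A \<alpha> \<beta> \<mu> \<Longrightarrow> W p d A \<alpha> \<beta> \<le> match_cost p d \<mu>"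
  unfolding W_def by (rule INF_lower) simp

lemma W_lessE:
  assumes "W p d A \<alpha> \<beta> < t"
  obtains \<mu> where "is_matching A \<alpha> \<beta> \<mu>" "match_cost p d \<mu> < t"
  using assms unfolding W_def by (auto simp: INF_less_iff)

lemma match_cost_zero_diag: "match_cost p d zero_diag = 0"
  unfolding match_cost_def supp_def zero_diag_def enn_powr_def by (simp add: bot_ennreal)

lemma match_cost_top_point_diag: "match_cost top d (point_diag z m) \<le> d (fst z) (snd z)"
  unfolding match_cost_def using supp_point_diag[of z m] by (auto intro!: SUP_least)

lemma match_cost_point_diag:
  assumes "p \<noteq> top"
  shows "match_cost p d (point_diag z m)
    = enn_powr (of_nat m * enn_powr (d (fst z) (snd z)) (enn2real p)) (1 / enn2real p)"
proof -
  have "usum (\<lambda>w. ennreal_of_enat (point_diag z m w) * enn_powr (d (fst w) (snd w)) (enn2real p)) UNIV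
      = ennreal_of_enat (enat m) * enn_powr (d (fst z) (snd z)) (enn2real p)"
    by (subst usum_eq_single[of z]) (auto simp: point_diag_def)
  then show ?thesis
    using assms unfolding match_cost_def by simp
qed

lemma zero_diag_in_Dfin: "zero_diag \<in> Dfin A"
  unfolding Dfin_def Dbar_def supp_def zero_diag_def by (auto simp: zero_enat_def)

lemma point_diag_in_Dfin: "x \<notin> A \<Longrightarrow> point_diag x m \<in> Dfin A"
  using countable_supp_point_diag[of x m] supp_point_diag[of x m]
  unfolding Dfin_def Dbar_def by (auto simp: point_diag_def finite_subset zero_enat_def)

lemma card_diag_u_part_point_diag: "card_diag (u_part d A \<delta> (point_diag x m)) < \<infinity>"
proof -
  have "card_diag (u_part d A \<delta> (point_diag x m)) = u_part d A \<delta> (point_diag x m) x"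
    unfolding card_diag_def
    by (rule usum_eq_single) (auto simp: u_part_def restrict_diag_def point_diag_def)
  also have "\<dots> \<le> enat m"
    unfolding u_part_def restrict_diag_def point_diag_def by auto
  also have "\<dots> < \<infinity>"
    by simp
  finally show ?thesis .
qed

lemma zero_diag_in_Dbar_p: "zero_diag \<in> Dbar_p p d A"
proof -
  have "W p d A zero_diag zero_diag < top"
    using W_le_match_cost[OF is_matching_zero_zero, of p d A] match_cost_zero_diag[of p d]
    by simp
  moreover have "restrict_diag zero_diag S = zero_diag" for S :: "'a set"
    unfolding restrict_diag_def zero_diag_def by auto
  ultimately show ?thesis
    using zero_diag_in_Dfin[of A]
    unfolding Dbar_p_def Dfin_def l_part_def u_part_def card_diag_def
    by (simp add: zero_diag_def)
qed

lemma point_diag_in_Dbar_p: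
  assumes "x \<notin> A" "a \<in> A" "d x a < top"
  shows "point_diag x m \<in> Dbar_p p d A"
proof (cases "p = top")
  case True
  then show ?thesis
    using point_diag_in_Dfin[OF assms(1)] card_diag_u_part_point_diag
    unfolding Dbar_p_def Dfin_def by auto
next
  case False
  have "setdist d x A < top"
    using setdist_le[OF assms(2), of d x] assms(3) by (simp add: le_less_trans)
  then have "l_part d A top (point_diag x m) = point_diag x m"
    unfolding l_part_def restrict_diag_def thick_def point_diag_def using assms(1) by auto
  moreover have "W p d A (point_diag x m) zero_diag < top"
    using W_le_match_cost[OF is_matching_point_zero[OF assms(1,2)], of p d m] assms(3) False
    unfolding match_cost_point_diag[OF False] enn_powr_def
    by (simp add: ennreal_mult_eq_top_iff le_less_trans)
  ultimately show ?thesis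
    using point_diag_in_Dfin[OF assms(1)] card_diag_u_part_point_diag False
    unfolding Dbar_p_def Dfin_def by auto
qed

lemma mass_le_Dfin:
  assumes "\<gamma> \<in> Dfin A"
  shows "\<exists>N. mass_le \<gamma> UNIV N"
proof -
  have fin: "finite (supp \<gamma>)" and "\<And>x. \<gamma> x \<noteq> \<infinity>"
    using assms unfolding Dfin_def by auto
  then have "\<And>x. \<gamma> x = of_nat (the_enat (\<gamma> x))"
    by (metis enat.exhaust of_nat_eq_enat the_enat.simps)
  then have "sum \<gamma> (supp \<gamma>) = of_nat (\<Sum>x\<in>supp \<gamma>. the_enat (\<gamma> x))"
    by (simp add: of_nat_sum[symmetric] cong: sum.cong)
  moreover have "usum \<gamma> UNIV = sum \<gamma> (supp \<gamma>)"
    using fin by (rule usum_eq_sum) (simp add: supp_def)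
  ultimately have "usum \<gamma> UNIV \<le> enat (\<Sum>x\<in>supp \<gamma>. the_enat (\<gamma> x))"
    by (simp add: of_nat_eq_enat)
  then show ?thesis
    using mass_le_usum by blast
qed

lemma mass_le_far_from_Dbar_p_top:
  assumes "\<gamma> \<in> Dbar_p top d A" and "0 < c"
  shows "\<exists>N. mass_le \<gamma> (far_from d A c) N"
proof -
  have "card_diag (u_part d A (ennreal c) \<gamma>) < \<infinity>"
    using assms unfolding Dbar_p_def by auto
  then obtain N where "usum (u_part d A (ennreal c) \<gamma>) UNIV = enat N"
    unfolding card_diag_def using less_infinityE by blast
  then have "mass_le (u_part d A (ennreal c) \<gamma>) (far_from d A c) N"
    by (intro mass_le_subset[OF mass_le_usum, of _ UNIV]) auto
  then have "mass_le \<gamma> (far_from d A c) N"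
    by (rule mass_le_cong[rotated])
      (auto simp: u_part_def restrict_diag_def thick_def far_from_def)
  then show ?thesis ..
qed

lemma mass_le_far_from_of_matching_tail:
  assumes em: "ext_metric d"
    and U: "usum (u_part d A top \<gamma>) UNIV = enat U"
    and \<mu>: "is_matching A (l_part d A top \<gamma>) zero_diag \<mu>"
    and cost: "powr_cost q d \<mu> \<le> ennreal C" "0 \<le> C" "0 \<le> q"
    and tail: "powr_cost q d (restrict_diag \<mu> (- F)) \<le> ennreal \<epsilon>" "0 \<le> \<epsilon>"
    and \<eta>: "0 < \<eta>" "\<And>z. z \<in> F \<Longrightarrow> \<mu> z \<noteq> 0 \<Longrightarrow> ennreal \<eta> \<le> setdist d (fst z) A"
    and "0 < c"
  shows "mass_le \<gamma> (far_from d A c) (U + C / \<eta> powr q + \<epsilon> / c powr q)"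
proof -
  define Inf where "Inf = {y. setdist d y A = top}"
  define Mid where "Mid = {y. ennreal \<eta> \<le> setdist d y A \<and> setdist d y A < top}"
  define Near where "Near = {y \<in> far_from d A c. setdist d y A < ennreal \<eta>}"
  have from_l_part: "mass_le \<gamma> S b"
    if "mass_le (l_part d A top \<gamma>) S b" "\<And>x. x \<in> S \<Longrightarrow> x \<notin> A \<and> setdist d x A < top" for S b
    using that by (intro mass_le_cong[OF _ that(1)]) (simp add: l_part_def restrict_diag_def thick_def)
  have "mass_le (u_part d A top \<gamma>) Inf U"
    using U by (intro mass_le_subset[OF mass_le_usum, of _ UNIV]) auto
  then have inf: "mass_le \<gamma> Inf U"
    by (rule mass_le_cong[rotated]) (simp add: Inf_def u_part_def restrict_diag_def thick_def)
  have "Mid \<inter> A = {}"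
    using \<eta>(1) setdist_eq_0[OF em] by (fastforce simp: Mid_def)
  then have "mass_le (l_part d A top \<gamma>) Mid (C / \<eta> powr q)"
    by (rule mass_le_of_matching_to_zero[OF \<mu> _ _ mass_le_far_pairs_powr[OF cost(1,2) \<eta>(1) cost(3)]])
      (auto simp: Mid_def)
  then have mid: "mass_le \<gamma> Mid (C / \<eta> powr q)"
    using \<open>Mid \<inter> A = {}\<close> by (intro from_l_part) (auto simp: Mid_def)
  have "Near \<inter> A = {}"
    using far_from_disjoint[OF em] by (auto simp: Near_def)
  moreover have "restrict_diag \<mu> (- F) z = \<mu> z" if "z \<in> Near \<times> UNIV" for z
    using that \<eta>(2)[of z] by (force simp: Near_def restrict_diag_def not_le[symmetric])
  ultimately have "mass_le (l_part d A top \<gamma>) Near (\<epsilon> / c powr q)"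
    by (intro mass_le_of_matching_to_zero[OF \<mu> _ _ mass_le_far_pairs_powr[OF tail \<open>0 < c\<close> cost(3)]])
      (auto simp: Near_def far_from_def less_imp_le)
  then have near: "mass_le \<gamma> Near (\<epsilon> / c powr q)"
    using \<open>Near \<inter> A = {}\<close> ennreal_less_top[of \<eta>]
    by (intro from_l_part) (auto simp: Near_def intro: order.strict_trans)
  have "far_from d A c \<subseteq> Inf \<union> Mid \<union> Near"
    by (auto simp: Inf_def Mid_def Near_def top.not_eq_extremum not_le)
  then show ?thesis
    using mass_le_Un[OF mass_le_Un[OF inf mid] near] by (rule mass_le_subset[rotated])
qed

lemma mass_le_far_from_Dbar_p:
  assumes "metric_pair d A" and "p \<noteq> top" and "0 < enn2real p"
    and "\<gamma> \<in> Dbar_p p d A" and "0 < \<epsilon>"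
  shows "\<exists>G. \<forall>c>0. mass_le \<gamma> (far_from d A c) (G + \<epsilon> / c powr enn2real p)"
proof -
  define q where "q = enn2real p"
  have em: "ext_metric d"
    using assms(1) unfolding metric_pair_def by simp
  have "card_diag (u_part d A top \<gamma>) < \<infinity>" and "W p d A (l_part d A top \<gamma>) zero_diag < top"
    using assms(2,4) unfolding Dbar_p_def by auto
  then obtain U \<mu> where U: "usum (u_part d A top \<gamma>) UNIV = enat U"
    and \<mu>: "is_matching A (l_part d A top \<gamma>) zero_diag \<mu>" "match_cost p d \<mu> < top"
    unfolding card_diag_def by (metis W_lessE less_infinityE)
  have cost: "powr_cost q d \<mu> < top"
    using \<mu>(2) unfolding match_cost_eq_powr_cost[OF assms(2)] q_def enn_powr_def
    by (auto simp: top.not_eq_extremum split: if_splits)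
  then obtain F where "finite F" and tail:
    "\<And>Q. finite Q \<Longrightarrow> Q \<inter> F = {}
      \<Longrightarrow> (\<Sum>z\<in>Q. ennreal_of_enat (\<mu> z) * enn_powr (d (fst z) (snd z)) q) \<le> ennreal \<epsilon>"
    using usum_tail_le assms(5) unfolding powr_cost_def by blast
  have fin: "finite (fst ` {z \<in> F. \<mu> z \<noteq> 0})"
    using \<open>finite F\<close> by simp
  have disj: "fst ` {z \<in> F. \<mu> z \<noteq> 0} \<inter> A = {}"
    using is_matching_zero_diag_support(2)[OF \<mu>(1)] by auto
  obtain \<eta> where "0 < \<eta>"
    and "\<And>x. x \<in> fst ` {z \<in> F. \<mu> z \<noteq> 0} \<Longrightarrow> ennreal \<eta> \<le> setdist d x A"
    using setdist_uniform_lower_bound[OF assms(1) fin disj] by blast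
  then have \<eta>: "0 < \<eta>" "\<And>z. z \<in> F \<Longrightarrow> \<mu> z \<noteq> 0 \<Longrightarrow> ennreal \<eta> \<le> setdist d (fst z) A"
    by auto
  have "mass_le \<gamma> (far_from d A c) (real U + enn2real (powr_cost q d \<mu>) / \<eta> powr q + \<epsilon> / c powr q)"
    if "0 < c" for c
    using mass_le_far_from_of_matching_tail[OF em U \<mu>(1) _ _ _ powr_cost_restrict_le[OF tail] _ \<eta> that]
      cost assms(3,5) unfolding q_def by (simp add: less_top)
  then show ?thesis
    unfolding q_def by (metis add.assoc)
qed

section \<open>Sparse diagrams\<close>

(* The sets U_K of the header; r k stands for d(x_k, A) and m k for the multiplicity of x_k. *)
definition sparse_diags ::
  "'a fsum set \<Rightarrow> ('a \<Rightarrow> 'a \<Rightarrow> ennreal) \<Rightarrow> 'a set \<Rightarrow> (nat \<Rightarrow> real) \<Rightarrow> (nat \<Rightarrow> nat) \<Rightarrow> nat \<Rightarrow> 'a fsum set"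
  where
  "sparse_diags S d A r m K = {\<gamma> \<in> S. \<exists>l \<theta>. 0 < l \<and> l < 1 \<and> \<theta> < 1/2 \<and>
     (\<forall>k\<ge>K. mass_le \<gamma> (far_from d A (l * r k)) (\<theta> * real (m k)))}"

lemma point_diag_notin_sparse_diags:
  assumes "setdist d (x k) A = ennreal (r k)" "0 < r k" "0 < m k" "K \<le> k"
  shows "point_diag (x k) (m k) \<notin> sparse_diags S d A r m K"
proof
  assume "point_diag (x k) (m k) \<in> sparse_diags S d A r m K"
  then obtain l \<theta> where l: "0 < l" "l < 1" "\<theta> < 1/2"
    and mass_all: "\<forall>k'\<ge>K. mass_le (point_diag (x k) (m k)) (far_from d A (l * r k')) (\<theta> * real (m k'))"
    unfolding sparse_diags_def mem_Collect_eq by (elim conjE exE)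
  have mass: "mass_le (point_diag (x k) (m k)) (far_from d A (l * r k)) (\<theta> * real (m k))"
    using mass_all assms(4) by simp
  have "x k \<in> far_from d A (l * r k)"
    unfolding far_from_def using assms(1,2) l(2) by (simp add: ennreal_lessI)
  then have "real (m k) \<le> \<theta> * real (m k)"
    by (intro mass_leD[OF mass, of "{x k}"]) (simp_all add: point_diag_def)
  moreover have "\<theta> * real (m k) < 1 * real (m k)"
    using l(3) assms(3) by (intro mult_strict_right_mono) auto
  ultimately show False
    by linarith
qed

lemma not_hemicompact_sparse_cover:
  fixes \<rho> :: "'a fsum \<Rightarrow> 'a fsum \<Rightarrow> ennreal"
  assumes "zero_diag \<in> S"
    and "\<And>e. 0 < e \<Longrightarrow> \<exists>x r m. (\<forall>k. 0 < r k \<and> setdist d (x k) A = ennreal (r k) \<and> 0 < m k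
           \<and> point_diag (x k) (m k) \<in> S \<and> \<rho> zero_diag (point_diag (x k) (m k)) < e)
         \<and> (\<forall>K. openin (dist_topology S \<rho>) (sparse_diags S d A r m K))
         \<and> S \<subseteq> (\<Union>K. sparse_diags S d A r m K)"
  shows "\<not> hemicompact (dist_topology S \<rho>)"
proof (rule not_hemicompact_dist_topology[OF assms(1)])
  fix e :: ennreal and C assume "0 < e" and C: "compactin (dist_topology S \<rho>) C"
  obtain x r m where seq: "\<forall>k. 0 < r k \<and> setdist d (x k) A = ennreal (r k) \<and> 0 < m k
      \<and> point_diag (x k) (m k) \<in> S \<and> \<rho> zero_diag (point_diag (x k) (m k)) < e"
    and open_sets: "\<forall>K. openin (dist_topology S \<rho>) (sparse_diags S d A r m K)"
    and cover: "S \<subseteq> (\<Union>K. sparse_diags S d A r m K)"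
    using assms(2)[OF \<open>0 < e\<close>] by (elim exE conjE)
  have "C \<subseteq> (\<Union>K. sparse_diags S d A r m K)"
    using compactin_subset_topspace[OF C] cover by simp
  moreover have "point_diag (x j) (m j) \<notin> sparse_diags S d A r m i" if "i \<le> j" for i j
    using seq that by (intro point_diag_notin_sparse_diags) auto
  ultimately obtain j where "point_diag (x j) (m j) \<notin> C"
    using compactin_omits_escaping_sequence[OF C, of "sparse_diags S d A r m" "\<lambda>j. point_diag (x j) (m j)"]
      open_sets by blast
  then show "\<exists>\<alpha>\<in>S. \<rho> zero_diag \<alpha> < e \<and> \<alpha> \<notin> C"
    using seq by blast
qed

section \<open>The bottleneck distance\<close>

lemma openin_sparse_diags_W_top:
  assumes "ext_metric d" and "0 < r"
  shows "openin (dist_topology S (W top d A)) (sparse_diags S d A (\<lambda>_. r) m K)"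
  unfolding openin_dist_topology
proof (intro conjI ballI)
  fix \<gamma> assume "\<gamma> \<in> sparse_diags S d A (\<lambda>_. r) m K"
  then obtain l \<theta> where l: "0 < l" "l < 1" "\<theta> < 1/2"
    and mass: "\<And>k. k \<ge> K \<Longrightarrow> mass_le \<gamma> (far_from d A (l * r)) (\<theta> * real (m k))"
    unfolding sparse_diags_def by blast
  define s where "s = (1 - l) / 2 * r"
  have "0 < s"
    unfolding s_def using far_from_margins[OF l(1,2) assms(2)] by simp
  moreover have "\<gamma>' \<in> sparse_diags S d A (\<lambda>_. r) m K"
    if \<gamma>': "\<gamma>' \<in> S" "W top d A \<gamma> \<gamma>' < ennreal s" for \<gamma>'
  proof -
    obtain \<mu> where \<mu>: "is_matching A \<gamma> \<gamma>' \<mu>" "match_cost top d \<mu> < ennreal s"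
      using \<gamma>'(2) by (rule W_lessE)
    have "mass_le \<gamma>' (far_from d A ((1 + l) / 2 * r)) (\<theta> * real (m k))" if "k \<ge> K" for k
      using mass_le_far_from_perturb_top[OF assms(1) \<mu>(1) _ l(1,2) assms(2) mass[OF that]] \<mu>(2)
      unfolding s_def by blast
    then show ?thesis
      unfolding sparse_diags_def using \<gamma>'(1) l
      by (intro CollectI conjI exI[of _ "(1 + l) / 2"] exI[of _ \<theta>]) auto
  qed
  ultimately show "\<exists>e>0. {y \<in> S. W top d A \<gamma> y < e} \<subseteq> sparse_diags S d A (\<lambda>_. r) m K"
    by (intro exI[of _ "ennreal s"]) auto
qed (auto simp: sparse_diags_def)

lemma sparse_diags_cover_top:
  assumes "0 < r" and "\<And>\<gamma>. \<gamma> \<in> S \<Longrightarrow> \<exists>N. mass_le \<gamma> (far_from d A (r / 2)) N"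
  shows "S \<subseteq> (\<Union>K. sparse_diags S d A (\<lambda>_. r) Suc K)"
proof
  fix \<gamma> assume "\<gamma> \<in> S"
  then obtain N where N: "mass_le \<gamma> (far_from d A (r / 2)) N"
    using assms(2) by blast
  define K where "K = nat \<lceil>4 * N\<rceil>"
  have "mass_le \<gamma> (far_from d A (1/2 * r)) (1/4 * Suc k)" if "K \<le> k" for k
  proof -
    have "4 * N \<le> real K"
      unfolding K_def by (rule real_nat_ceiling_ge)
    then have "N \<le> 1/4 * Suc k"
      using that by simp
    then show ?thesis
      using N by (intro mass_le_mono[OF N]) auto
  qed
  then have "\<gamma> \<in> sparse_diags S d A (\<lambda>_. r) Suc K"
    unfolding sparse_diags_def using \<open>\<gamma> \<in> S\<close>
    by (intro CollectI conjI exI[of _ "1/2"] exI[of _ "1/4"]) auto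
  then show "\<gamma> \<in> (\<Union>K. sparse_diags S d A (\<lambda>_. r) Suc K)"
    by blast
qed

lemma not_hemicompact_W_top:
  assumes "metric_pair d A" and "\<not> isolated_set d A" and "zero_diag \<in> S"
    and "\<And>x a m. x \<notin> A \<Longrightarrow> a \<in> A \<Longrightarrow> d x a < top \<Longrightarrow> point_diag x m \<in> S"
    and "\<And>\<gamma> c. \<gamma> \<in> S \<Longrightarrow> 0 < c \<Longrightarrow> \<exists>N. mass_le \<gamma> (far_from d A c) N"
  shows "\<not> hemicompact (dist_topology S (W top d A))"
proof (rule not_hemicompact_sparse_cover[OF assms(3)])
  have em: "ext_metric d"
    using assms(1) unfolding metric_pair_def by simp
  fix e :: ennreal assume "0 < e"
  then obtain x a r where xa: "x \<notin> A" "a \<in> A" "d x a < e" "d x a < top" "0 < r"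
    "setdist d x A = ennreal r"
    using close_pair_near_boundary[OF assms(1,2) \<open>0 < e\<close>] by blast
  have "W top d A zero_diag (point_diag x m) < e" for m
  proof -
    have "W top d A zero_diag (point_diag x m) \<le> match_cost top d (point_diag (a, x) m)"
      by (rule W_le_match_cost[OF is_matching_zero_point[OF xa(1,2)]])
    also have "\<dots> \<le> d a x"
      using match_cost_top_point_diag[of d "(a, x)" m] by simp
    also have "\<dots> = d x a"
      using em unfolding ext_metric_def by blast
    finally show ?thesis
      using xa(3) by simp
  qed
  moreover have "S \<subseteq> (\<Union>K. sparse_diags S d A (\<lambda>_. r) Suc K)"
    using xa(5) assms(5) by (intro sparse_diags_cover_top) auto
  ultimately show "\<exists>x r m. (\<forall>k. 0 < r k \<and> setdist d (x k) A = ennreal (r k) \<and> 0 < m k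
           \<and> point_diag (x k) (m k) \<in> S \<and> W top d A zero_diag (point_diag (x k) (m k)) < e)
         \<and> (\<forall>K. openin (dist_topology S (W top d A)) (sparse_diags S d A r m K))
         \<and> S \<subseteq> (\<Union>K. sparse_diags S d A r m K)"
    using xa assms(4) openin_sparse_diags_W_top[OF em xa(5)]
    by (intro exI[of _ "\<lambda>_. x"] exI[of _ "\<lambda>_. r"] exI[of _ Suc]) auto
qed

section \<open>Finite exponents\<close>

lemma multiplicity_between:
  fixes D a :: real
  assumes "0 < D" and "4 * (real k + 1) * D < a"
  obtains m :: nat where "k < m" "real m * D < a" "a / 4 \<le> real m * D"
proof -
  have "0 < 4 * (real k + 1) * D"
    using assms(1) by (intro mult_pos_pos) auto
  then have "0 < a"
    using assms(2) by linarith
  define M where "M = a / (2 * D)"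
  have M: "2 * real k + 2 < M"
    unfolding M_def using assms by (simp add: field_simps)
  define m where "m = nat \<lfloor>M\<rfloor>"
  have "real m = of_int \<lfloor>M\<rfloor>"
    unfolding m_def using M by simp
  then have m: "real m \<le> M" "M - 1 < real m"
    by linarith+
  show ?thesis
  proof (rule that)
    have "real k < real m"
      using m M by linarith
    then show "k < m"
      by simp
    have "real m * D \<le> M * D"
      using m(1) assms(1) by (simp add: mult_right_mono)
    also have "M * D < a"
      unfolding M_def using assms(1) \<open>0 < a\<close> by simp
    finally show "real m * D < a" .
    have "M / 2 \<le> real m"
      using m M by linarith
    then have "M / 2 * D \<le> real m * D"
      using assms(1) by (simp add: mult_right_mono)
    then show "a / 4 \<le> real m * D"
      unfolding M_def using assms(1) by simp
  qed
qed

lemma match_cost_point_diag_less: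
  assumes "p \<noteq> top" and "0 < enn2real p"
    and "d (fst z) (snd z) = ennreal D" "0 < D" and "real m * D powr enn2real p < e powr enn2real p"
    and "0 < e"
  shows "match_cost p d (point_diag z m) < ennreal e"
proof -
  define q where "q = enn2real p"
  have "match_cost p d (point_diag z m) = ennreal ((real m * D powr q) powr (1 / q))"
    using assms(3,4) unfolding match_cost_point_diag[OF assms(1)] q_def enn_powr_def
    by (simp add: ennreal_of_nat_eq_real_of_nat ennreal_mult[symmetric])
  also have "(real m * D powr q) powr (1 / q) < (e powr q) powr (1 / q)"
    using assms(2,5) unfolding q_def by (intro powr_less_mono2) auto
  then have "ennreal ((real m * D powr q) powr (1 / q)) < ennreal e"
    using assms(2,6) unfolding q_def by (simp add: powr_powr ennreal_lessI)
  finally show ?thesis .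
qed

lemma heavy_point_near_boundary:
  assumes "metric_pair d A" and "\<not> isolated_set d A" and "p \<noteq> top" and "0 < enn2real p"
    and "0 < e"
  obtains x a r m where "x \<notin> A" "a \<in> A" "d x a < top" "0 < r" "setdist d x A = ennreal r" "k < m"
    "e powr enn2real p / (4 * 2 powr enn2real p) \<le> real m * r powr enn2real p"
    "match_cost p d (point_diag (a, x) m) < ennreal e"
proof -
  define q where "q = enn2real p"
  have "0 < q"
    using assms(4) unfolding q_def .
  define \<delta> where "\<delta> = (e powr q / (4 * (real k + 1))) powr (1 / q)"
  have "0 < \<delta>"
    unfolding \<delta>_def using assms(5) by simp
  then have "0 < ennreal \<delta>"
    by simp
  then obtain x a r where xa: "x \<notin> A" "a \<in> A" "d x a < ennreal \<delta>" "d x a < top" "0 < r"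
    "setdist d x A = ennreal r" "d x a < ennreal (2 * r)"
    by (rule close_pair_near_boundary[OF assms(1,2)])
  define D where "D = enn2real (d x a)"
  have dD: "d x a = ennreal D" and "0 \<le> D"
    unfolding D_def using xa(4) by simp_all
  have "r \<le> D"
    using setdist_le[OF xa(2), of d x] xa(6) dD by (simp add: ennreal_le_iff[OF \<open>0 \<le> D\<close>])
  then have "0 < D"
    using xa(5) by simp
  have "D < \<delta>" "D < 2 * r"
    using xa(3,7) dD by (simp_all add: ennreal_less_iff[OF \<open>0 \<le> D\<close>])
  have "D powr q < \<delta> powr q"
    using \<open>0 < D\<close> \<open>D < \<delta>\<close> \<open>0 < q\<close> by (intro powr_less_mono2) auto
  also have "\<delta> powr q = e powr q / (4 * (real k + 1))"
    unfolding \<delta>_def using \<open>0 < q\<close> assms(5) by (simp add: powr_powr)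
  finally have "4 * (real k + 1) * D powr q < e powr q"
    by (simp add: field_simps)
  moreover have "0 < D powr q"
    using \<open>0 < D\<close> by simp
  ultimately obtain m where m: "k < m" "real m * D powr q < e powr q" "e powr q / 4 \<le> real m * D powr q"
    using multiplicity_between by blast
  have "d a x = ennreal D"
    using assms(1) dD unfolding metric_pair_def ext_metric_def by metis
  then have cost: "match_cost p d (point_diag (a, x) m) < ennreal e"
    using m(2) unfolding q_def by (intro match_cost_point_diag_less[OF assms(3,4) _ \<open>0 < D\<close> _ assms(5)]) simp_all
  have "D powr q / 2 powr q \<le> r powr q"
    using \<open>D < 2 * r\<close> \<open>0 < D\<close> \<open>0 < q\<close> by (simp add: powr_divide[symmetric] powr_mono2)
  have "e powr q / (4 * 2 powr q) = (e powr q / 4) / 2 powr q"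
    by simp
  also have "\<dots> \<le> real m * D powr q / 2 powr q"
    using m(3) by (intro divide_right_mono) auto
  also have "\<dots> \<le> real m * r powr q"
    using \<open>D powr q / 2 powr q \<le> r powr q\<close> by (simp add: mult_left_mono flip: times_divide_eq_right)
  finally have "e powr q / (4 * 2 powr q) \<le> real m * r powr q" .
  then show ?thesis
    using that xa(1,2,4,5,6) m(1) cost unfolding q_def by blast
qed

lemma heavy_point_sequence:
  assumes "metric_pair d A" and "\<not> isolated_set d A" and "p \<noteq> top" and "0 < enn2real p"
    and "0 < e"
  obtains x a r m where "\<And>k. x k \<notin> A" "\<And>k. a k \<in> A" "\<And>k. d (x k) (a k) < top" "\<And>k. 0 < r k"
    "\<And>k. setdist d (x k) A = ennreal (r k)" "\<And>k. k < m k"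
    "\<And>k. e powr enn2real p / (4 * 2 powr enn2real p) \<le> real (m k) * r k powr enn2real p"
    "\<And>k. W p d A zero_diag (point_diag (x k) (m k)) < ennreal e"
proof -
  define E where "E = e powr enn2real p / (4 * 2 powr enn2real p)"
  have "\<forall>k. \<exists>x a r m. x \<notin> A \<and> a \<in> A \<and> d x a < top \<and> 0 < r \<and> setdist d x A = ennreal r \<and> k < m
      \<and> E \<le> real m * r powr enn2real p \<and> W p d A zero_diag (point_diag x m) < ennreal e"
  proof
    fix k
    obtain x a r m where xa: "x \<notin> A" "a \<in> A" "d x a < top" "0 < r" "setdist d x A = ennreal r" "k < m"
      "E \<le> real m * r powr enn2real p" "match_cost p d (point_diag (a, x) m) < ennreal e"
      unfolding E_def by (rule heavy_point_near_boundary[OF assms])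
    have "W p d A zero_diag (point_diag x m) < ennreal e"
      using W_le_match_cost[OF is_matching_zero_point[OF xa(1,2)], of p d m] xa(8) by (rule le_less_trans)
    then show "\<exists>x a r m. x \<notin> A \<and> a \<in> A \<and> d x a < top \<and> 0 < r \<and> setdist d x A = ennreal r \<and> k < m
      \<and> E \<le> real m * r powr enn2real p \<and> W p d A zero_diag (point_diag x m) < ennreal e"
      using xa by blast
  qed
  then have "\<exists>x a r m. \<forall>k. x k \<notin> A \<and> a k \<in> A \<and> d (x k) (a k) < top \<and> 0 < r k
      \<and> setdist d (x k) A = ennreal (r k) \<and> k < m k \<and> E \<le> real (m k) * r k powr enn2real p
      \<and> W p d A zero_diag (point_diag (x k) (m k)) < ennreal e"
    by (simp only: choice_iff)
  then obtain x a r m where "\<forall>k. x k \<notin> A \<and> a k \<in> A \<and> d (x k) (a k) < top \<and> 0 < r k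
      \<and> setdist d (x k) A = ennreal (r k) \<and> k < m k \<and> E \<le> real (m k) * r k powr enn2real p
      \<and> W p d A zero_diag (point_diag (x k) (m k)) < ennreal e"
    by blast
  then show ?thesis
    by (intro that[of x a r m]) (simp_all add: E_def)
qed

lemma openin_sparse_diags_W:
  assumes "ext_metric d" and "p \<noteq> top" and "0 < enn2real p" and "0 < E"
    and "\<And>k. 0 < r k" and "\<And>k. E \<le> real (m k) * r k powr enn2real p"
  shows "openin (dist_topology S (W p d A)) (sparse_diags S d A r m K)"
  unfolding openin_dist_topology
proof (intro conjI ballI)
  define q where "q = enn2real p"
  have "0 < q"
    using assms(3) unfolding q_def .
  fix \<gamma> assume "\<gamma> \<in> sparse_diags S d A r m K"
  then obtain l \<theta> where l: "0 < l" "l < 1" "\<theta> < 1/2"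
    and mass: "\<forall>k\<ge>K. mass_le \<gamma> (far_from d A (l * r k)) (\<theta> * real (m k))"
    unfolding sparse_diags_def mem_Collect_eq by (elim conjE exE)
  define \<theta>' where "\<theta>' = (\<theta> + 1/2) / 2"
  define a where "a = ((1 - l) / 2) powr q"
  define T where "T = (\<theta>' - \<theta>) * E * a"
  have "0 < a" "0 < T"
    unfolding T_def a_def \<theta>'_def using l assms(4) by auto
  define t where "t = T powr (1 / q)"
  have "0 < t"
    unfolding t_def using \<open>0 < T\<close> by simp
  have tq: "t powr q = T"
    unfolding t_def using \<open>0 < T\<close> \<open>0 < q\<close> by (simp add: powr_powr)
  have "\<gamma>' \<in> sparse_diags S d A r m K"
    if \<gamma>': "\<gamma>' \<in> S" "W p d A \<gamma> \<gamma>' < ennreal t" for \<gamma>'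
  proof -
    obtain \<mu> where \<mu>: "is_matching A \<gamma> \<gamma>' \<mu>" "match_cost p d \<mu> < ennreal t"
      using \<gamma>'(2) by (rule W_lessE)
    have cost: "powr_cost q d \<mu> \<le> ennreal T"
      using powr_cost_le_of_match_cost[OF \<mu>(2) assms(2,3)] tq unfolding q_def by simp
    have "mass_le \<gamma>' (far_from d A ((1 + l) / 2 * r k)) (\<theta>' * real (m k))" if "K \<le> k" for k
    proof -
      have "((1 - l) / 2 * r k) powr q = a * r k powr q"
        unfolding a_def by (rule powr_mult; use l assms(5)[of k] in simp)
      then have "T / ((1 - l) / 2 * r k) powr q = (\<theta>' - \<theta>) * E / r k powr q"
        unfolding T_def using \<open>0 < a\<close> by simp
      also have "\<dots> \<le> (\<theta>' - \<theta>) * real (m k)"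
        using assms(5,6)[of k] l(3) unfolding \<theta>'_def q_def
        by (simp add: divide_le_eq mult.assoc mult_left_mono)
      finally have "\<theta> * real (m k) + T / ((1 - l) / 2 * r k) powr q \<le> \<theta>' * real (m k)"
        by (simp add: algebra_simps)
      then show ?thesis
        using \<open>0 < T\<close> \<open>0 < q\<close>
        by (intro mass_le_mono[OF mass_le_far_from_perturb_powr[OF assms(1) \<mu>(1) cost _ _ l(1,2) assms(5)
              mass[rule_format, OF that]]]) auto
    qed
    then show ?thesis
      unfolding sparse_diags_def using \<gamma>'(1) l
      by (intro CollectI conjI exI[of _ "(1 + l) / 2"] exI[of _ \<theta>']) (auto simp: \<theta>'_def)
  qed
  then show "\<exists>e>0. {y \<in> S. W p d A \<gamma> y < e} \<subseteq> sparse_diags S d A r m K"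
    using \<open>0 < t\<close> by (intro exI[of _ "ennreal t"]) auto
qed (auto simp: sparse_diags_def)

lemma sparse_diags_cover:
  assumes "0 < E" and "\<And>k. 0 < r k" and "\<And>k. E \<le> real (m k) * r k powr q" and "\<And>k. k \<le> m k"
    and "\<And>\<gamma> \<epsilon>. \<gamma> \<in> S \<Longrightarrow> 0 < \<epsilon> \<Longrightarrow> \<exists>G. \<forall>c>0. mass_le \<gamma> (far_from d A c) (G + \<epsilon> / c powr q)"
  shows "S \<subseteq> (\<Union>K. sparse_diags S d A r m K)"
proof
  fix \<gamma> assume "\<gamma> \<in> S"
  define \<epsilon> where "\<epsilon> = E / (8 * 2 powr q)"
  have "0 < \<epsilon>"
    unfolding \<epsilon>_def using assms(1) by simp
  then obtain G where G: "\<And>c. 0 < c \<Longrightarrow> mass_le \<gamma> (far_from d A c) (G + \<epsilon> / c powr q)"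
    using assms(5)[OF \<open>\<gamma> \<in> S\<close>] by blast
  define K where "K = nat \<lceil>8 * G\<rceil>"
  have "mass_le \<gamma> (far_from d A (1/2 * r k)) (1/4 * real (m k))" if "K \<le> k" for k
  proof -
    have "8 * G \<le> real (m k)"
      using real_nat_ceiling_ge[of "8 * G"] that assms(4)[of k] unfolding K_def by linarith
    moreover have "\<epsilon> / (1/2 * r k) powr q = E / (8 * r k powr q)"
      unfolding \<epsilon>_def using assms(2)[of k] by (simp add: powr_divide powr_mult field_simps)
    moreover have "E / (8 * r k powr q) \<le> real (m k) / 8"
      using assms(2,3)[of k] by (simp add: divide_le_eq)
    ultimately have "G + \<epsilon> / (1/2 * r k) powr q \<le> 1/4 * real (m k)"
      by linarith
    then show ?thesis
      using G[of "1/2 * r k"] assms(2)[of k] by (intro mass_le_mono[OF G[of "1/2 * r k"]]) auto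
  qed
  then have "\<gamma> \<in> sparse_diags S d A r m K"
    unfolding sparse_diags_def using \<open>\<gamma> \<in> S\<close>
    by (intro CollectI conjI exI[of _ "1/2"] exI[of _ "1/4"]) auto
  then show "\<gamma> \<in> (\<Union>K. sparse_diags S d A r m K)"
    by blast
qed

lemma not_hemicompact_W:
  assumes "metric_pair d A" and "\<not> isolated_set d A" and "p \<noteq> top" and "0 < enn2real p"
    and "zero_diag \<in> S"
    and "\<And>x a m. x \<notin> A \<Longrightarrow> a \<in> A \<Longrightarrow> d x a < top \<Longrightarrow> point_diag x m \<in> S"
    and "\<And>\<gamma> \<epsilon>. \<gamma> \<in> S \<Longrightarrow> 0 < \<epsilon>
      \<Longrightarrow> \<exists>G. \<forall>c>0. mass_le \<gamma> (far_from d A c) (G + \<epsilon> / c powr enn2real p)"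
  shows "\<not> hemicompact (dist_topology S (W p d A))"
proof (rule not_hemicompact_sparse_cover[OF assms(5)])
  have em: "ext_metric d"
    using assms(1) unfolding metric_pair_def by simp
  fix e :: ennreal assume "0 < e"
  obtain e0 where e0: "0 < e0" "ennreal e0 \<le> e"
  proof (cases "e = top")
    case True
    then show ?thesis
      using that[of 1] by simp
  next
    case False
    then show ?thesis
      using that[of "enn2real e"] \<open>0 < e\<close> by (simp add: enn2real_positive_iff less_top)
  qed
  obtain x a r m where seq: "\<And>k. x k \<notin> A" "\<And>k. a k \<in> A" "\<And>k. d (x k) (a k) < top"
    "\<And>k. 0 < r k" "\<And>k. setdist d (x k) A = ennreal (r k)" "\<And>k. k < m k"
    "\<And>k. e0 powr enn2real p / (4 * 2 powr enn2real p) \<le> real (m k) * r k powr enn2real p"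
    "\<And>k. W p d A zero_diag (point_diag (x k) (m k)) < ennreal e0"
    using heavy_point_sequence[OF assms(1-4) e0(1)] by blast
  define E where "E = e0 powr enn2real p / (4 * 2 powr enn2real p)"
  have "0 < E"
    unfolding E_def using e0(1) by simp
  have "openin (dist_topology S (W p d A)) (sparse_diags S d A r m K)" for K
    using openin_sparse_diags_W[OF em assms(3,4) \<open>0 < E\<close>, of r m S A K] seq(4,7)
    unfolding E_def by blast
  moreover have "S \<subseteq> (\<Union>K. sparse_diags S d A r m K)"
    using \<open>0 < E\<close> seq(4,7) less_imp_le[OF seq(6)] assms(7)
    unfolding E_def by (intro sparse_diags_cover) auto
  moreover have "W p d A zero_diag (point_diag (x k) (m k)) < e" for k
    using seq(8) e0(2) by (rule order.strict_trans2)
  ultimately show "\<exists>x r m. (\<forall>k. 0 < r k \<and> setdist d (x k) A = ennreal (r k) \<and> 0 < m k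
           \<and> point_diag (x k) (m k) \<in> S \<and> W p d A zero_diag (point_diag (x k) (m k)) < e)
         \<and> (\<forall>K. openin (dist_topology S (W p d A)) (sparse_diags S d A r m K))
         \<and> S \<subseteq> (\<Union>K. sparse_diags S d A r m K)"
    using seq(4,5) assms(6)[OF seq(1-3)] le_less_trans[OF le0 seq(6)]
    by (intro exI[of _ x] exI[of _ r] exI[of _ m] conjI allI) auto
qed

theorem theorem7p21:
  fixes d :: "'a \<Rightarrow> 'a \<Rightarrow> ennreal" and A :: "'a set" and p :: ennreal
  assumes "metric_pair d A"
    and "\<not> isolated_set d A"
    and "1 \<le> p"
  shows "\<not> hemicompact (dist_topology (Dfin A) (W p d A))
       \<and> \<not> hemicompact (dist_topology (Dbar_p p d A) (W p d A))"
proof (cases "p = top")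
  case True
  have "\<not> hemicompact (dist_topology (Dfin A) (W top d A))"
    using mass_le_Dfin mass_le_subset
    by (intro not_hemicompact_W_top[OF assms(1,2) zero_diag_in_Dfin point_diag_in_Dfin]) blast+
  moreover have "\<not> hemicompact (dist_topology (Dbar_p top d A) (W top d A))"
    by (intro not_hemicompact_W_top[OF assms(1,2) zero_diag_in_Dbar_p point_diag_in_Dbar_p
          mass_le_far_from_Dbar_p_top])
  ultimately show ?thesis
    using True by simp
next
  case False
  moreover have "0 < p"
    using zero_less_one assms(3) by (rule less_le_trans)
  ultimately have "0 < enn2real p"
    by (simp add: enn2real_positive_iff less_top)
  have "\<exists>G. \<forall>c>0. mass_le \<gamma> (far_from d A c) (G + \<epsilon> / c powr enn2real p)"
    if "\<gamma> \<in> Dfin A" "0 < \<epsilon>" for \<gamma> \<epsilon>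
    using mass_le_Dfin[OF that(1)] that(2) by (metis mass_le_mono inf_le1 le_add_same_cancel1
        divide_nonneg_nonneg less_imp_le powr_ge_zero subset_UNIV)
  then have "\<not> hemicompact (dist_topology (Dfin A) (W p d A))"
    by (intro not_hemicompact_W[OF assms(1,2) False \<open>0 < enn2real p\<close> zero_diag_in_Dfin
          point_diag_in_Dfin])
  moreover have "\<not> hemicompact (dist_topology (Dbar_p p d A) (W p d A))"
    by (intro not_hemicompact_W[OF assms(1,2) False \<open>0 < enn2real p\<close> zero_diag_in_Dbar_p
          point_diag_in_Dbar_p mass_le_far_from_Dbar_p[OF assms(1) False \<open>0 < enn2real p\<close>]])
  ultimately show ?thesis ..
qed

end
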